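(* Let $d\ge1$ and let $(\gamma_1,w_1)$ be a weighted Marcinkiewicz–Zygmund curve of order $1$ on $\mathbb S^d$ with constants $0<a\le A$. Then \[ \ell(\gamma_1)\ge 2\sqrt{d+1}\,\frac{d+1}{d+2}\Big(\frac aA\Big)^{3/2}. \]
   Context: $\mathbb S^d\subset\mathbb R^{d+1}$ is the unit sphere with normalized surface measure (total mass $1$). $\Pi_1$ is the space of restrictions to $\mathbb S^d$ of polynomials in $d+1$ variables of degree at most $1$. A curve is a continuous, piecewise smooth, closed map $\gamma:[0,L]\to\mathbb S^d$ parametrized by arc length, with length $\ell(\gamma)=L$ and $\int_\gamma g:=\int_0^Lg(\gamma(u))\,du$. A weighted Marcinkiewicz–Zygmund curve of order $t$ is a pair $(\gamma_t,w_t)$ of such a curve and a nonnegative weight $w_t$ integrable on its trajectory with $a\|f\|_{L^2(\mathbb S^d)}^2\le\frac1{\ell(\gamma_t)}\int_{\gamma_t}|f|^2w_t\le A\|f\|_{L^2(\mathbb S^d)}^2$ for all $f\in\Pi_t$. *)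

theory Defs
  imports "HOL-Analysis.Analysis"
begin

text \<open>Normalized surface measure on the unit sphere of a Euclidean space:
  the push-forward of the normalized Lebesgue measure on the open unit ball under
  the radial projection x \<mapsto> x / |x| (cone-measure description of the
  normalized surface measure; total mass 1).\<close>
definition sphere_measure :: "'a::euclidean_space measure" where
  "sphere_measure = distr (uniform_measure lborel (ball 0 1)) borel (\<lambda>x. x /\<^sub>R norm x)"

definition sphere_L2_sq :: "('a::euclidean_space \<Rightarrow> real) \<Rightarrow> real" where
  "sphere_L2_sq f = (\<integral>x. (f x)\<^sup>2 \<partial>sphere_measure)"

definition Pi1 :: "('a::euclidean_space \<Rightarrow> real) set" where
  "Pi1 = {f. \<exists>c b. \<forall>x. f x = c + b \<bullet> x}"

definition sphere_curve :: "(real \<Rightarrow> 'a::euclidean_space) \<Rightarrow> real \<Rightarrow> bool" where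
  "sphere_curve \<gamma> L \<longleftrightarrow>
     0 \<le> L \<and> \<gamma> ` {0..L} \<subseteq> sphere 0 1 \<and>
     continuous_on {0..L} \<gamma> \<and>
     \<gamma> piecewise_C1_differentiable_on {0..L} \<and>
     \<gamma> 0 = \<gamma> L \<and>
     (\<exists>S. finite S \<and> (\<forall>u\<in>{0<..<L} - S.
         \<gamma> differentiable (at u) \<and> norm (vector_derivative \<gamma> (at u)) = 1))"

definition MZ_curve_1 ::
  "(real \<Rightarrow> 'a::euclidean_space) \<Rightarrow> real \<Rightarrow> ('a \<Rightarrow> real) \<Rightarrow> real \<Rightarrow> real \<Rightarrow> bool" where
  "MZ_curve_1 \<gamma> L w a A \<longleftrightarrow>
     sphere_curve \<gamma> L \<and>
     (\<forall>u\<in>{0..L}. 0 \<le> w (\<gamma> u)) \<and>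
     (\<lambda>u. w (\<gamma> u)) integrable_on {0..L} \<and>
     (\<forall>f\<in>Pi1.
        a * sphere_L2_sq f \<le> (1 / L) * integral {0..L} (\<lambda>u. (f (\<gamma> u))\<^sup>2 * w (\<gamma> u)) \<and>
        (1 / L) * integral {0..L} (\<lambda>u. (f (\<gamma> u))\<^sup>2 * w (\<gamma> u)) \<le> A * sphere_L2_sq f)"

end

theory Submission
  imports Defs "HOL-Probability.Probability_Measure"
begin

(* The Marcinkiewicz-Zygmund inequalities are tested with f = 1, which bounds the mean weight
   along the curve by A, and with f = <b, _> for unit vectors b, whose squared L2 norm on the
   sphere is 1/(d+1) by the symmetry of the sphere under coordinate permutations and
   reflections. If the curve stays within distance rho of the span of a finite set S, summing
   the lower inequality over an orthonormal family B orthogonal to S with at least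
   d + 1 - card S elements, and bounding the sum over B of <b, gamma u>^2 by rho^2 (Bessel),
   gives (d + 1 - card S) a <= (d + 1) rho^2 A.
   A closed unit-speed curve of length L stays within L/4 of the midpoint of gamma 0 and
   gamma (L/2), and within L/(2N) of N equally spaced points on it. The midpoint (for d <= 3)
   and N = d - 1 points (for d >= 4) yield L^2 >= c_d a/A with a constant c_d large enough for
   the claim; as a/A <= 1, the bound even holds with (a/A) powr (1/2). *)

section \<open>Symmetries of Lebesgue measure\<close>

definition permute_coords :: "('a \<Rightarrow> 'a) \<Rightarrow> 'a::euclidean_space \<Rightarrow> 'a" where
  "permute_coords p x = (\<Sum>b\<in>Basis. (x \<bullet> p b) *\<^sub>R b)"

lemma inner_permute_coords_Basis:
  "c \<in> Basis \<Longrightarrow> permute_coords p x \<bullet> c = x \<bullet> p c"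
  by (simp add: permute_coords_def inner_sum_left inner_Basis if_distrib cong: if_cong)

lemma borel_measurable_permute_coords [measurable]: "permute_coords p \<in> borel_measurable borel"
  unfolding permute_coords_def by measurable

lemma orthogonal_transformation_permute_coords:
  assumes p: "p permutes Basis"
  shows "orthogonal_transformation (permute_coords p)"
proof -
  have inner: "permute_coords p v \<bullet> permute_coords p w = v \<bullet> w" for v w
  proof -
    have "permute_coords p v \<bullet> permute_coords p w = (\<Sum>b\<in>Basis. (v \<bullet> p b) * (w \<bullet> p b))"
      by (subst euclidean_inner) (simp add: inner_permute_coords_Basis)
    also have "\<dots> = (\<Sum>b\<in>Basis. (v \<bullet> b) * (w \<bullet> b))"
      using sum.permute[OF p, of "\<lambda>b. (v \<bullet> b) * (w \<bullet> b)"] by (simp add: o_def)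
    finally show ?thesis
      by (simp add: euclidean_inner[of v w])
  qed
  moreover have "linear (permute_coords p)"
    by (rule linearI)
      (simp_all add: permute_coords_def inner_add_left scaleR_add_left sum.distrib scaleR_sum_right)
  moreover have "norm (permute_coords p v) = norm v" for v
    by (simp only: norm_eq_sqrt_inner inner)
  ultimately show ?thesis
    by (simp add: orthogonal_transformation)
qed

lemma distr_lborel_permute_coords:
  fixes p :: "'a::euclidean_space \<Rightarrow> 'a"
  assumes p: "p permutes Basis"
  shows "distr lborel borel (permute_coords p) = lborel"
proof (rule lborel_eqI[symmetric])
  fix l u :: 'a
  assume le: "\<And>b. b \<in> Basis \<Longrightarrow> l \<bullet> b \<le> u \<bullet> b"
  let ?q = "permute_coords (inv p)"
  have inv_p: "inv p permutes Basis"
    using p by (rule permutes_inv)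
  have "permute_coords p -` box l u = box (?q l) (?q u)"
  proof -
    have "(\<forall>b\<in>Basis. l \<bullet> b < x \<bullet> p b \<and> x \<bullet> p b < u \<bullet> b) \<longleftrightarrow>
          (\<forall>c\<in>Basis. l \<bullet> inv p c < x \<bullet> c \<and> x \<bullet> c < u \<bullet> inv p c)" for x
      by (subst (2) permutes_image[OF p, symmetric]) (simp add: permutes_inverses[OF p])
    then show ?thesis
      by (auto simp: mem_box inner_permute_coords_Basis)
  qed
  then have "emeasure (distr lborel borel (permute_coords p)) (box l u)
      = emeasure lborel (box (?q l) (?q u))"
    by (simp add: emeasure_distr)
  also have "\<dots> = (\<Prod>c\<in>Basis. (u - l) \<bullet> inv p c)"
    using le inv_p by (subst emeasure_lborel_box)
      (auto simp: inner_permute_coords_Basis inner_diff_left permutes_in_image intro!: prod.cong)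
  also have "\<dots> = (\<Prod>b\<in>Basis. (u - l) \<bullet> b)"
    using prod.permute[OF inv_p, of "\<lambda>b. (u - l) \<bullet> b"] by (simp add: o_def)
  finally show "emeasure (distr lborel borel (permute_coords p)) (box l u)
      = (\<Prod>b\<in>Basis. (u - l) \<bullet> b)" .
qed simp

definition reflection :: "'a::real_inner \<Rightarrow> 'a \<Rightarrow> 'a" where
  "reflection i x = x - (2 * (x \<bullet> i)) *\<^sub>R i"

lemma orthogonal_transformation_reflection:
  fixes i :: "'a::euclidean_space"
  assumes "norm i = 1"
  shows "orthogonal_transformation (reflection i)"
proof -
  have ii: "i \<bullet> i = 1"
    using assms by (simp add: norm_eq_1)
  have "reflection i x \<bullet> reflection i x = x \<bullet> x" for x
    by (simp add: reflection_def inner_diff_left inner_diff_right inner_commute[of i x] ii)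
  then have "norm (reflection i x) = norm x" for x
    by (simp add: norm_eq_sqrt_inner)
  moreover have "linear (reflection i)"
    by (rule linearI) (simp_all add: reflection_def inner_add_left algebra_simps)
  ultimately show ?thesis
    unfolding orthogonal_transformation by blast
qed

lemma distr_lborel_reflection:
  fixes i :: "'a::euclidean_space"
  assumes i: "i \<in> Basis"
  shows "distr lborel borel (reflection i) = lborel"
proof -
  define c where "c j = (if j = i then -1 else 1 :: real)" for j :: 'a
  have "reflection i = (\<lambda>x. 0 + (\<Sum>j\<in>Basis. (c j * (x \<bullet> j)) *\<^sub>R j))"
  proof (intro ext euclidean_eqI[where 'a='a])
    fix x b :: 'a
    assume "b \<in> Basis"
    with i show "reflection i x \<bullet> b = (0 + (\<Sum>j\<in>Basis. (c j * (x \<bullet> j)) *\<^sub>R j)) \<bullet> b"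
      by (auto simp: reflection_def c_def inner_sum_left inner_diff_left inner_Basis if_distrib
          cong: if_cong)
  qed
  moreover have "(\<Prod>j\<in>Basis. \<bar>c j\<bar>) = 1"
    by (intro prod.neutral) (simp add: c_def)
  ultimately show ?thesis
    using lborel_affine_euclidean[of c 0] by (simp add: c_def density_1)
qed

section \<open>Second moments of the normalized surface measure\<close>

lemma prob_space_sphere_measure: "prob_space (sphere_measure :: 'a::euclidean_space measure)"
proof -
  have "emeasure lborel (ball (0::'a) 1) \<noteq> 0" "emeasure lborel (ball (0::'a) 1) \<noteq> \<infinity>"
    by (simp_all add: emeasure_ball less_imp_not_eq2)
  then have "prob_space (uniform_measure lborel (ball (0::'a) 1))"
    by (rule prob_space_uniform_measure)
  then show ?thesis
    unfolding sphere_measure_def by (rule prob_space.prob_space_distr) measurable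
qed

lemma sets_sphere_measure [simp, measurable_cong]: "sets sphere_measure = sets borel"
  by (simp add: sphere_measure_def)

lemma AE_sphere_measure_norm: "AE x in sphere_measure. norm x = 1"
proof -
  have "AE x in lborel. x \<noteq> (0::'a::euclidean_space)"
    by (rule AE_lborel_singleton)
  then have "AE x in uniform_measure lborel (ball (0::'a) 1). x \<noteq> 0"
    by (intro AE_uniform_measureI) (auto elim: AE_mp)
  then have "AE x in uniform_measure lborel (ball (0::'a) 1). norm (x /\<^sub>R norm x) = 1"
    by eventually_elim simp
  then show ?thesis
    unfolding sphere_measure_def by (subst AE_distr_iff) simp_all
qed

lemma borel_measurable_linear:
  fixes f :: "'a::euclidean_space \<Rightarrow> 'b::euclidean_space"
  assumes "linear f"
  shows "f \<in> borel_measurable borel"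
  using assms
  by (intro borel_measurable_continuous_onI linear_continuous_on)
    (simp add: linear_conv_bounded_linear)

lemma distr_sphere_measure_orthogonal:
  fixes T :: "'a::euclidean_space \<Rightarrow> 'a"
  assumes T: "orthogonal_transformation T" and lborel_T: "distr lborel borel T = lborel"
  shows "distr sphere_measure borel T = sphere_measure"
proof -
  let ?g = "\<lambda>x::'a. indicator (ball 0 1) x / emeasure lborel (ball (0::'a) 1)"
  have lin: "linear T" and norm_T: "\<And>x. norm (T x) = norm x"
    using T by (auto simp: orthogonal_transformation_norm orthogonal_transformation_linear)
  have [measurable]: "T \<in> borel_measurable borel"
    using lin by (rule borel_measurable_linear)
  have [measurable]: "ball (0::'a) 1 \<in> sets borel"
    by simp
  have ball: "distr (uniform_measure lborel (ball 0 1)) borel T = uniform_measure lborel (ball 0 1)"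
  proof -
    have "uniform_measure lborel (ball 0 1) = density (distr lborel borel T) ?g"
      by (simp add: lborel_T uniform_measure_def)
    also have "\<dots> = distr (density lborel (\<lambda>x. ?g (T x))) borel T"
      by (rule density_distr) measurable
    also have "(\<lambda>x. ?g (T x)) = ?g"
      by (simp add: norm_T indicator_def)
    finally show ?thesis
      by (simp add: uniform_measure_def)
  qed
  have "distr sphere_measure borel T
      = distr (uniform_measure lborel (ball 0 1)) borel (T \<circ> (\<lambda>x. x /\<^sub>R norm x))"
    unfolding sphere_measure_def by (subst distr_distr) auto
  also have "T \<circ> (\<lambda>x. x /\<^sub>R norm x) = (\<lambda>x. x /\<^sub>R norm x) \<circ> T"
    by (auto simp: norm_T linear_scale[OF lin])
  also have "distr (uniform_measure lborel (ball 0 1)) borel \<dots> = sphere_measure"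
    unfolding sphere_measure_def by (subst distr_distr[of _ borel, symmetric]) (auto simp: ball)
  finally show ?thesis .
qed

lemma integral_sphere_measure_orthogonal:
  fixes T :: "'a::euclidean_space \<Rightarrow> 'a" and g :: "'a \<Rightarrow> real"
  assumes "orthogonal_transformation T" "distr lborel borel T = lborel" "g \<in> borel_measurable borel"
  shows "(\<integral>x. g (T x) \<partial>sphere_measure) = (\<integral>x. g x \<partial>sphere_measure)"
proof -
  have "T \<in> borel_measurable borel"
    using assms(1) borel_measurable_linear orthogonal_transformation_linear by blast
  then have "T \<in> borel_measurable sphere_measure"
    by (simp only: measurable_cong_sets[OF sets_sphere_measure refl])
  then have "(\<integral>x. g (T x) \<partial>sphere_measure) = (\<integral>x. g x \<partial>distr sphere_measure borel T)"
    using assms(3) by (rule integral_distr[symmetric])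
  then show ?thesis
    using assms(1,2) by (simp add: distr_sphere_measure_orthogonal)
qed

lemma integrable_sphere_measure_inner_mult:
  fixes u v :: "'a::euclidean_space"
  shows "integrable sphere_measure (\<lambda>x. (x \<bullet> u) * (x \<bullet> v))"
proof (rule finite_measure.integrable_const_bound)
  show "finite_measure (sphere_measure :: 'a measure)"
    using prob_space_sphere_measure by (rule prob_space.finite_measure)
  show "AE x in sphere_measure. norm ((x \<bullet> u) * (x \<bullet> v)) \<le> norm u * norm v"
    using AE_sphere_measure_norm
  proof eventually_elim
    case (elim x)
    then show ?case
      using Cauchy_Schwarz_ineq2[of x u] Cauchy_Schwarz_ineq2[of x v]
      by (simp add: abs_mult mult_mono)
  qed
qed simp

lemma integral_sphere_measure_inner_Basis_orthogonal:
  fixes i j :: "'a::euclidean_space"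
  assumes i: "i \<in> Basis" and "j \<in> Basis" and "i \<noteq> j"
  shows "(\<integral>x. (x \<bullet> i) * (x \<bullet> j) \<partial>sphere_measure) = 0"
proof -
  have "(\<integral>x. (x \<bullet> i) * (x \<bullet> j) \<partial>sphere_measure)
      = (\<integral>x. (reflection i x \<bullet> i) * (reflection i x \<bullet> j) \<partial>sphere_measure)"
    using i by (intro integral_sphere_measure_orthogonal[symmetric]
        orthogonal_transformation_reflection distr_lborel_reflection) auto
  also have "\<dots> = - (\<integral>x. (x \<bullet> i) * (x \<bullet> j) \<partial>sphere_measure)"
    using assms by (simp add: reflection_def inner_diff_left inner_Basis)
  finally show ?thesis
    by simp
qed

lemma integral_sphere_measure_inner_Basis_square:
  fixes i :: "'a::euclidean_space"
  assumes i: "i \<in> Basis"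
  shows "(\<integral>x. (x \<bullet> i) * (x \<bullet> i) \<partial>sphere_measure) = 1 / DIM('a)"
proof -
  let ?m = "\<lambda>k. \<integral>x. (x \<bullet> k) * (x \<bullet> k) \<partial>sphere_measure"
  have same: "?m k = ?m i" if k: "k \<in> Basis" for k :: 'a
  proof -
    let ?T = "permute_coords (Transposition.transpose i k)"
    have p: "Transposition.transpose i k permutes Basis"
      using i k by (rule permutes_swap_id)
    have "?m i = (\<integral>x. (?T x \<bullet> k) * (?T x \<bullet> k) \<partial>sphere_measure)"
      using i k by (simp add: inner_permute_coords_Basis)
    also have "\<dots> = ?m k"
      using p by (intro integral_sphere_measure_orthogonal orthogonal_transformation_permute_coords
          distr_lborel_permute_coords) auto
    finally show ?thesis ..
  qed
  have sum_sq: "AE x in sphere_measure. (\<Sum>k\<in>(Basis::'a set). (x \<bullet> k) * (x \<bullet> k)) = (1::real)"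
    using AE_sphere_measure_norm by eventually_elim (simp add: euclidean_inner[symmetric] norm_eq_1)
  have "(\<Sum>k\<in>(Basis::'a set). ?m k) = (\<integral>x. (\<Sum>k\<in>(Basis::'a set). (x \<bullet> k) * (x \<bullet> k)) \<partial>sphere_measure)"
    by (rule Bochner_Integration.integral_sum[symmetric])
      (rule integrable_sphere_measure_inner_mult)
  also have "\<dots> = (\<integral>x. 1 \<partial>(sphere_measure :: 'a measure))"
    by (rule integral_cong_AE) (simp_all add: sum_sq)
  also have "\<dots> = 1"
    by (simp add: prob_space.prob_space[OF prob_space_sphere_measure])
  finally have "(\<Sum>k\<in>(Basis::'a set). ?m k) = 1" .
  then have "real DIM('a) * ?m i = 1"
    using same by simp
  then show ?thesis
    by (simp add: field_simps)
qed

lemma sphere_L2_sq_const: "sphere_L2_sq (\<lambda>_::'a::euclidean_space. c) = c\<^sup>2"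
  by (simp add: sphere_L2_sq_def prob_space.prob_space[OF prob_space_sphere_measure])

lemma sphere_L2_sq_inner: "sphere_L2_sq (\<lambda>x::'a::euclidean_space. u \<bullet> x) = (norm u)\<^sup>2 / DIM('a)"
proof -
  let ?m = "\<lambda>i j. \<integral>x. (x \<bullet> i) * (x \<bullet> j) \<partial>(sphere_measure :: 'a measure)"
  have moments: "?m i j = (if j = i then 1 / DIM('a) else 0)" if "i \<in> Basis" "j \<in> Basis" for i j
    using that by (simp add: integral_sphere_measure_inner_Basis_orthogonal
        integral_sphere_measure_inner_Basis_square)
  have "(u \<bullet> x)\<^sup>2 = (\<Sum>i\<in>Basis. \<Sum>j\<in>Basis. ((u \<bullet> i) * (u \<bullet> j)) * ((x \<bullet> i) * (x \<bullet> j)))" for x :: 'a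
    by (simp add: euclidean_inner[of u x] power2_eq_square sum_product algebra_simps)
  then have "sphere_L2_sq (\<lambda>x::'a. u \<bullet> x) = (\<Sum>i\<in>Basis. \<Sum>j\<in>Basis. ((u \<bullet> i) * (u \<bullet> j)) * ?m i j)"
    by (simp add: sphere_L2_sq_def integrable_sphere_measure_inner_mult)
  also have "\<dots> = (\<Sum>i\<in>Basis. (u \<bullet> i)\<^sup>2 / DIM('a))"
    by (simp add: moments power2_eq_square if_distrib cong: sum.cong if_cong)
  also have "\<dots> = (norm u)\<^sup>2 / DIM('a)"
    unfolding sum_divide_distrib[symmetric] power2_norm_eq_inner
    by (subst (2) euclidean_inner) (simp add: power2_eq_square)
  finally show ?thesis .
qed

section \<open>Closed unit-speed curves\<close>

lemma sphere_curve_dist_le: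
  fixes \<gamma> :: "real \<Rightarrow> 'a::euclidean_space"
  assumes "sphere_curve \<gamma> L" and "u \<in> {0..L}" and "v \<in> {0..L}"
  shows "dist (\<gamma> u) (\<gamma> v) \<le> \<bar>u - v\<bar>"
proof -
  obtain S where "finite S" and unit_speed:
      "\<And>t. t \<in> {0<..<L} - S \<Longrightarrow> \<gamma> differentiable (at t) \<and> norm (vector_derivative \<gamma> (at t)) = 1"
    using assms(1) unfolding sphere_curve_def by blast
  have cont: "continuous_on {0..L} \<gamma>"
    using assms(1) unfolding sphere_curve_def by blast
  have lip: "dist (\<gamma> x) (\<gamma> y) \<le> y - x" if "0 \<le> x" "x \<le> y" "y \<le> L" for x y
  proof -
    have "((\<lambda>t. vector_derivative \<gamma> (at t)) has_integral \<gamma> y - \<gamma> x) {x..y}"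
      using \<open>finite S\<close> \<open>x \<le> y\<close>
    proof (rule fundamental_theorem_of_calculus_interior_strong)
      show "(\<gamma> has_vector_derivative vector_derivative \<gamma> (at t)) (at t)" if "t \<in> {x<..<y} - S" for t
        using that \<open>0 \<le> x\<close> \<open>y \<le> L\<close> unit_speed by (simp add: vector_derivative_works)
      show "continuous_on {x..y} \<gamma>"
        using cont by (rule continuous_on_subset) (use that in auto)
    qed
    then have "norm (\<gamma> y - \<gamma> x) \<le> 1 * measure lborel (cbox x y)"
      using \<open>finite S\<close> by (intro has_integral_bound_spike_finite[of 1 "S \<union> {x, y}"])
        (use that unit_speed in auto)
    then show ?thesis
      using that by (simp add: dist_norm norm_minus_commute)
  qed
  show ?thesis
    using assms(2,3) lip[of u v] lip[of v u] by (cases "u \<le> v") (auto simp: dist_commute)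
qed

lemma dist_midpoint_le:
  fixes x a b :: "'a::real_normed_vector"
  shows "dist x (midpoint a b) \<le> (dist x a + dist x b) / 2"
proof -
  have "x - midpoint a b = (1/2) *\<^sub>R (x - a) + (1/2) *\<^sub>R (x - b)"
    by (simp add: midpoint_def algebra_simps flip: scaleR_add_left)
  then have "norm (x - midpoint a b) \<le> norm ((1/2) *\<^sub>R (x - a)) + norm ((1/2) *\<^sub>R (x - b))"
    by (metis norm_triangle_ineq)
  then show ?thesis
    by (simp add: dist_norm)
qed

lemma sphere_curve_near_midpoint:
  fixes \<gamma> :: "real \<Rightarrow> 'a::euclidean_space"
  assumes "sphere_curve \<gamma> L" and "u \<in> {0..L}"
  shows "dist (\<gamma> u) (midpoint (\<gamma> 0) (\<gamma> (L/2))) \<le> L / 4"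
proof -
  have closed: "\<gamma> L = \<gamma> 0"
    using assms(1) unfolding sphere_curve_def by simp
  have "dist (\<gamma> u) (\<gamma> 0) + dist (\<gamma> u) (\<gamma> (L/2)) \<le> L / 2"
  proof (cases "u \<le> L/2")
    case True
    then show ?thesis
      using assms sphere_curve_dist_le[OF assms(1), of u 0]
        sphere_curve_dist_le[OF assms(1), of u "L/2"] by auto
  next
    case False
    then show ?thesis
      using assms closed sphere_curve_dist_le[OF assms(1), of u L]
        sphere_curve_dist_le[OF assms(1), of u "L/2"] by auto
  qed
  then show ?thesis
    using dist_midpoint_le[of "\<gamma> u" "\<gamma> 0" "\<gamma> (L/2)"] by simp
qed

lemma nearest_grid_point:
  fixes u L :: real and N :: nat
  assumes "0 \<le> u" "u \<le> L" "0 < N"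
  obtains k :: nat where "k \<le> N" "\<bar>u - k * L / N\<bar> \<le> L / (2 * N)"
proof
  define k where "k = nat (round (u * N / L))"
  have x: "0 \<le> u * N / L" "u * N / L \<le> N"
    using assms by (auto simp: divide_simps mult_right_mono)
  have r: "\<bar>u * N / L - of_int (round (u * N / L))\<bar> \<le> 1/2"
    using of_int_round_abs_le[of "u * N / L"] by (simp add: abs_minus_commute)
  have "0 \<le> round (u * N / L)"
    using x by (simp add: round_def)
  then have kr: "real k = of_int (round (u * N / L))"
    by (simp add: k_def)
  show "k \<le> N"
    using kr r x by linarith
  show "\<bar>u - k * L / N\<bar> \<le> L / (2 * N)"
  proof (cases "L = 0")
    case True
    then show ?thesis
      using assms by simp
  next
    case False
    then have "\<bar>u - k * L / N\<bar> = \<bar>u * N / L - k\<bar> * (L / N)"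
      using assms by (simp add: abs_mult[symmetric] field_simps)
    also have "\<dots> \<le> 1/2 * (L / N)"
      using kr r assms by (intro mult_right_mono) auto
    finally show ?thesis
      by simp
  qed
qed

lemma sphere_curve_near_samples:
  fixes \<gamma> :: "real \<Rightarrow> 'a::euclidean_space" and N :: nat
  assumes "sphere_curve \<gamma> L" and "0 < N" and u: "u \<in> {0..L}"
  shows "\<exists>k<N. dist (\<gamma> u) (\<gamma> (k * L / N)) \<le> L / (2 * N)"
proof -
  have closed: "\<gamma> L = \<gamma> 0"
    using assms(1) unfolding sphere_curve_def by simp
  obtain k :: nat where "k \<le> N" and k_close: "\<bar>u - k * L / N\<bar> \<le> L / (2 * N)"
    using nearest_grid_point[of u L N] u \<open>0 < N\<close> by auto
  have "k * L / N \<in> {0..L}"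
    using \<open>k \<le> N\<close> u by (auto simp: divide_simps mult.commute mult_left_mono)
  then have "dist (\<gamma> u) (\<gamma> (k * L / N)) \<le> L / (2 * N)"
    using sphere_curve_dist_le[OF assms(1) u] k_close by (meson order_trans)
  moreover have "\<gamma> ((k mod N) * L / N) = \<gamma> (k * L / N)"
    using \<open>k \<le> N\<close> \<open>0 < N\<close> closed by (cases "k = N") auto
  ultimately show ?thesis
    using \<open>0 < N\<close> by (intro exI[of _ "k mod N"]) auto
qed

section \<open>Curves near a subspace\<close>

lemma bessel_inequality:
  fixes B :: "'a::real_inner set"
  assumes "finite B" and "pairwise orthogonal B" and unit: "\<And>b. b \<in> B \<Longrightarrow> norm b = 1"
  shows "(\<Sum>b\<in>B. (b \<bullet> v)\<^sup>2) \<le> (norm v)\<^sup>2"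
proof -
  define p where "p = (\<Sum>b\<in>B. (b \<bullet> v) *\<^sub>R b)"
  have orthonormal: "b \<bullet> c = (if b = c then 1 else 0)" if "b \<in> B" "c \<in> B" for b c
    using that assms(2) unit[of b] by (auto simp: pairwise_def orthogonal_def norm_eq_1)
  have p_inner: "p \<bullet> c = c \<bullet> v" if "c \<in> B" for c
    using that \<open>finite B\<close>
    by (simp add: p_def inner_sum_left orthonormal if_distrib cong: sum.cong if_cong)
  have "p \<bullet> p = (\<Sum>b\<in>B. (b \<bullet> v) *\<^sub>R b) \<bullet> p"
    by (simp only: p_def)
  also have "\<dots> = (\<Sum>b\<in>B. (b \<bullet> v) * (b \<bullet> p))"
    by (simp add: inner_sum_left)
  also have "\<dots> = (\<Sum>b\<in>B. (b \<bullet> v)\<^sup>2)"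
    by (intro sum.cong refl) (simp add: p_inner inner_commute[of _ p] power2_eq_square)
  finally have "p \<bullet> p = (\<Sum>b\<in>B. (b \<bullet> v)\<^sup>2)" .
  moreover have "v \<bullet> p = (\<Sum>b\<in>B. (b \<bullet> v)\<^sup>2)"
    by (simp add: p_def inner_sum_right inner_commute power2_eq_square)
  moreover have "0 \<le> (v - p) \<bullet> (v - p)"
    by simp
  ultimately show ?thesis
    by (simp add: inner_diff_left inner_diff_right inner_commute power2_norm_eq_inner)
qed

lemma orthonormal_set_orthogonal_to_span:
  fixes S :: "'a::euclidean_space set"
  assumes "finite S"
  obtains B where "finite B" "pairwise orthogonal B" "\<And>b. b \<in> B \<Longrightarrow> norm b = 1"
    "\<And>b y. b \<in> B \<Longrightarrow> y \<in> span S \<Longrightarrow> y \<bullet> b = 0" "DIM('a) \<le> card B + card S"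
proof -
  define T where "T = {y. \<forall>x\<in>span S. orthogonal x y}"
  have "subspace T"
    unfolding T_def by (rule subspace_orthogonal_to_vectors)
  have "dim {y \<in> UNIV. \<forall>x\<in>span S. orthogonal x y} + dim (span S) = dim (UNIV::'a set)"
    by (rule dim_subspace_orthogonal_to_vectors) auto
  then have dim_T: "dim T + dim S = DIM('a)"
    by (simp add: T_def)
  have "dim S \<le> card S"
    using assms by (intro dim_le_card) (auto simp: span_superset)
  obtain B where B: "B \<subseteq> T" "pairwise orthogonal B" "\<And>x. x \<in> B \<Longrightarrow> norm x = 1"
      "independent B" "card B = dim T"
    using orthonormal_basis_subspace[OF \<open>subspace T\<close>] by metis
  show ?thesis
  proof (rule that)
    show "finite B"
      using \<open>independent B\<close> by (rule finiteI_independent)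
    show "y \<bullet> b = 0" if "b \<in> B" "y \<in> span S" for b y
      using that B(1) by (auto simp: T_def orthogonal_def)
    show "DIM('a) \<le> card B + card S"
      using dim_T B(5) \<open>dim S \<le> card S\<close> by linarith
  qed (use B in auto)
qed

lemma integrable_on_continuous_mult_nonneg:
  fixes g W :: "real \<Rightarrow> real"
  assumes g: "continuous_on {a..b} g" and W: "W integrable_on {a..b}" "\<And>u. u \<in> {a..b} \<Longrightarrow> 0 \<le> W u"
  shows "(\<lambda>u. g u * W u) integrable_on {a..b}"
proof -
  have "(\<lambda>u. g u * W u) absolutely_integrable_on {a..b}"
  proof (rule absolutely_integrable_bounded_measurable_product_real)
    show "g \<in> borel_measurable (lebesgue_on {a..b})"
      using g by (rule continuous_imp_measurable_on_sets_lebesgue) simp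
    show "bounded (g ` {a..b})"
      using g by (intro compact_imp_bounded compact_continuous_image) auto
    show "W absolutely_integrable_on {a..b}"
      using W by (rule nonnegative_absolutely_integrable_1)
  qed simp
  then show ?thesis
    by (simp add: absolutely_integrable_on_def)
qed

lemma MZ_curve_1_const_bounds:
  assumes "MZ_curve_1 \<gamma> L w a A"
  shows "a \<le> (1 / L) * integral {0..L} (\<lambda>u. w (\<gamma> u))"
    and "(1 / L) * integral {0..L} (\<lambda>u. w (\<gamma> u)) \<le> A"
proof -
  have "(\<lambda>_. 1) \<in> Pi1"
    unfolding Pi1_def by (intro CollectI exI[of _ 1] exI[of _ 0]) simp
  then show "a \<le> (1 / L) * integral {0..L} (\<lambda>u. w (\<gamma> u))"
    and "(1 / L) * integral {0..L} (\<lambda>u. w (\<gamma> u)) \<le> A"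
    using assms unfolding MZ_curve_1_def by (fastforce simp: sphere_L2_sq_const)+
qed

lemma MZ_curve_1_length_pos:
  assumes "MZ_curve_1 \<gamma> L w a A" and "0 < a"
  shows "0 < L"
proof -
  have "0 \<le> L"
    using assms(1) unfolding MZ_curve_1_def sphere_curve_def by blast
  moreover have "L \<noteq> 0"
    using MZ_curve_1_const_bounds(1)[OF assms(1)] \<open>0 < a\<close> by auto
  ultimately show ?thesis
    by simp
qed

lemma MZ_curve_1_inner_lower:
  fixes \<gamma> :: "real \<Rightarrow> 'a::euclidean_space"
  assumes "MZ_curve_1 \<gamma> L w a A"
  shows "a * (norm b)\<^sup>2 / DIM('a) \<le> (1 / L) * integral {0..L} (\<lambda>u. (b \<bullet> \<gamma> u)\<^sup>2 * w (\<gamma> u))"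
proof -
  have "(\<lambda>x. b \<bullet> x) \<in> Pi1"
    unfolding Pi1_def by (intro CollectI exI[of _ 0] exI[of _ b]) simp
  then show ?thesis
    using assms unfolding MZ_curve_1_def by (fastforce simp: sphere_L2_sq_inner)
qed

lemma MZ_curve_1_near_span:
  fixes \<gamma> :: "real \<Rightarrow> 'a::euclidean_space" and S :: "'a set" and \<rho> :: real
  assumes MZ: "MZ_curve_1 \<gamma> L w a A" and "0 < a" and "finite S"
    and near: "\<And>u. u \<in> {0..L} \<Longrightarrow> \<exists>y\<in>span S. dist (\<gamma> u) y \<le> \<rho>"
  shows "real (DIM('a) - card S) * a \<le> DIM('a) * \<rho>\<^sup>2 * A"
proof -
  obtain B where B: "finite B" "pairwise orthogonal B" "\<And>b. b \<in> B \<Longrightarrow> norm b = 1"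
      "\<And>b y. b \<in> B \<Longrightarrow> y \<in> span S \<Longrightarrow> y \<bullet> b = 0" and card_B: "DIM('a) \<le> card B + card S"
    using orthonormal_set_orthogonal_to_span[OF \<open>finite S\<close>] by metis
  have "0 < L"
    using MZ \<open>0 < a\<close> by (rule MZ_curve_1_length_pos)
  define W where "W u = w (\<gamma> u)" for u
  have W: "W integrable_on {0..L}" "\<And>u. u \<in> {0..L} \<Longrightarrow> 0 \<le> W u"
    and cont: "continuous_on {0..L} \<gamma>"
    using MZ unfolding MZ_curve_1_def sphere_curve_def W_def by auto
  have integrable: "(\<lambda>u. (b \<bullet> \<gamma> u)\<^sup>2 * W u) integrable_on {0..L}" for b
    using W by (intro integrable_on_continuous_mult_nonneg continuous_intros cont)
  have close: "(\<Sum>b\<in>B. (b \<bullet> \<gamma> u)\<^sup>2) \<le> \<rho>\<^sup>2" if u: "u \<in> {0..L}" for u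
  proof -
    obtain y where "y \<in> span S" and y: "dist (\<gamma> u) y \<le> \<rho>"
      using near[OF u] by blast
    then have "(\<Sum>b\<in>B. (b \<bullet> \<gamma> u)\<^sup>2) = (\<Sum>b\<in>B. (b \<bullet> (\<gamma> u - y))\<^sup>2)"
      using B(4) by (simp add: inner_diff_right inner_commute)
    also have "\<dots> \<le> (norm (\<gamma> u - y))\<^sup>2"
      by (rule bessel_inequality[OF B(1-3)])
    also have "\<dots> \<le> \<rho>\<^sup>2"
      using y by (simp add: dist_norm power_mono)
    finally show ?thesis .
  qed
  have "real (DIM('a) - card S) * a / DIM('a) \<le> (\<Sum>b\<in>B. a * (norm b)\<^sup>2 / DIM('a))"
    using card_B \<open>0 < a\<close> B(3) by (simp add: divide_right_mono mult_right_mono)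
  also have "\<dots> \<le> (\<Sum>b\<in>B. (1 / L) * integral {0..L} (\<lambda>u. (b \<bullet> \<gamma> u)\<^sup>2 * W u))"
    unfolding W_def by (intro sum_mono MZ_curve_1_inner_lower[OF MZ])
  also have "\<dots> = (1 / L) * integral {0..L} (\<lambda>u. (\<Sum>b\<in>B. (b \<bullet> \<gamma> u)\<^sup>2) * W u)"
    by (simp add: integral_sum[OF B(1)] integrable sum_distrib_left sum_distrib_right)
  also have "\<dots> \<le> (1 / L) * integral {0..L} (\<lambda>u. \<rho>\<^sup>2 * W u)"
  proof (intro mult_left_mono integral_le)
    show "(\<lambda>u. (\<Sum>b\<in>B. (b \<bullet> \<gamma> u)\<^sup>2) * W u) integrable_on {0..L}"
      using W by (intro integrable_on_continuous_mult_nonneg continuous_intros cont)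
    show "(\<lambda>u. \<rho>\<^sup>2 * W u) integrable_on {0..L}"
      using integrable_on_cmult_left[OF W(1), of "\<rho>\<^sup>2"] by simp
    show "(\<Sum>b\<in>B. (b \<bullet> \<gamma> u)\<^sup>2) * W u \<le> \<rho>\<^sup>2 * W u" if "u \<in> {0..L}" for u
      using close[OF that] W(2)[OF that] by (rule mult_right_mono)
  qed (use \<open>0 < L\<close> in simp)
  also have "\<dots> = \<rho>\<^sup>2 * ((1 / L) * integral {0..L} W)"
    by simp
  also have "\<dots> \<le> \<rho>\<^sup>2 * A"
    by (rule mult_left_mono)
      (use MZ_curve_1_const_bounds(2)[OF MZ] in \<open>simp_all add: W_def[abs_def]\<close>)
  finally show ?thesis
    by (simp add: divide_le_eq mult.commute mult.left_commute)
qed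

lemma MZ_curve_1_length_midpoint:
  fixes \<gamma> :: "real \<Rightarrow> 'a::euclidean_space" and L a A :: real
  assumes MZ: "MZ_curve_1 \<gamma> L w a A" and "0 < a"
  shows "16 * real (DIM('a) - 1) * a \<le> DIM('a) * L\<^sup>2 * A"
proof -
  have curve: "sphere_curve \<gamma> L"
    using MZ unfolding MZ_curve_1_def by blast
  have "real (DIM('a) - card {midpoint (\<gamma> 0) (\<gamma> (L/2))}) * a \<le> DIM('a) * (L / 4)\<^sup>2 * A"
    using MZ \<open>0 < a\<close> by (rule MZ_curve_1_near_span)
      (use sphere_curve_near_midpoint[OF curve] in \<open>auto intro: span_base\<close>)
  then show ?thesis
    by (simp add: power_divide algebra_simps)
qed

lemma MZ_curve_1_length_samples:
  fixes \<gamma> :: "real \<Rightarrow> 'a::euclidean_space" and L a A :: real and N :: nat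
  assumes MZ: "MZ_curve_1 \<gamma> L w a A" and "0 < a" and "0 < N"
  shows "4 * N\<^sup>2 * real (DIM('a) - N) * a \<le> DIM('a) * L\<^sup>2 * A"
proof -
  have curve: "sphere_curve \<gamma> L"
    using MZ unfolding MZ_curve_1_def by blast
  define S where "S = (\<lambda>k. \<gamma> (k * L / N)) ` {..<N}"
  have "card S \<le> N"
    unfolding S_def using card_image_le[of "{..<N}"] by simp
  have "\<exists>y\<in>span S. dist (\<gamma> u) y \<le> L / (2 * N)" if u: "u \<in> {0..L}" for u
  proof -
    obtain k where "k < N" "dist (\<gamma> u) (\<gamma> (k * L / N)) \<le> L / (2 * N)"
      using sphere_curve_near_samples[OF curve \<open>0 < N\<close> u] by blast
    then show ?thesis
      by (intro bexI[of _ "\<gamma> (k * L / N)"]) (auto simp: S_def intro: span_base)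
  qed
  then have "real (DIM('a) - card S) * a \<le> DIM('a) * (L / (2 * N))\<^sup>2 * A"
    using MZ \<open>0 < a\<close> by (intro MZ_curve_1_near_span) (auto simp: S_def)
  moreover have "real (DIM('a) - N) * a \<le> real (DIM('a) - card S) * a"
    using \<open>card S \<le> N\<close> \<open>0 < a\<close> by (intro mult_right_mono) auto
  ultimately have "4 * N\<^sup>2 * (real (DIM('a) - N) * a) \<le> 4 * N\<^sup>2 * (DIM('a) * (L / (2 * N))\<^sup>2 * A)"
    by (intro mult_left_mono) auto
  then show ?thesis
    using \<open>0 < N\<close> by (simp add: power_divide field_simps)
qed

section \<open>The length bound\<close>

lemma length_bound_of_square_bound:
  fixes x a A L c :: real
  assumes bound: "c * a \<le> (x + 1) * L\<^sup>2 * A" and c: "4 * (x + 1) ^ 4 \<le> (x + 2)\<^sup>2 * c"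
    and "0 < a" "a \<le> A" "0 \<le> L" "0 \<le> x"
  shows "2 * sqrt (x + 1) * ((x + 1) / (x + 2)) * (a / A) powr (3/2) \<le> L"
proof (rule power2_le_imp_le[OF _ \<open>0 \<le> L\<close>])
  define r where "r = a / A"
  have r: "0 < r" "r \<le> 1"
    using assms by (auto simp: r_def)
  have "(r powr (3/2))\<^sup>2 = r ^ 3"
    using r by (simp add: power2_eq_square powr_add[symmetric] powr_realpow)
  then have "(2 * sqrt (x + 1) * ((x + 1) / (x + 2)) * r powr (3/2))\<^sup>2
      = 4 * (x + 1) ^ 3 / (x + 2)\<^sup>2 * r ^ 3"
    using \<open>0 \<le> x\<close> by (simp add: power_mult_distrib power_divide)
      (simp add: field_simps power2_eq_square power3_eq_cube)
  also have "\<dots> \<le> 4 * (x + 1) ^ 3 / (x + 2)\<^sup>2 * r"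
    using r \<open>0 \<le> x\<close>
    by (intro mult_left_mono) (auto simp: power_le_one_iff power3_eq_cube mult_le_one)
  also have "\<dots> \<le> c / (x + 1) * r"
  proof (rule mult_right_mono)
    have "4 * (x + 1) ^ 3 * (x + 1) \<le> c * (x + 2)\<^sup>2"
      using c by (simp add: power4_eq_xxxx power3_eq_cube mult.commute)
    then show "4 * (x + 1) ^ 3 / (x + 2)\<^sup>2 \<le> c / (x + 1)"
      using \<open>0 \<le> x\<close> by (simp add: divide_simps)
  qed (use r in simp)
  also have "\<dots> = (c * a) / ((x + 1) * A)"
    by (simp add: r_def)
  also have "\<dots> \<le> L\<^sup>2"
  proof (subst pos_divide_le_eq)
    show "0 < (x + 1) * A"
      using assms by simp
  qed (use bound in \<open>simp add: algebra_simps\<close>)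
  finally show "(2 * sqrt (x + 1) * ((x + 1) / (x + 2)) * (a / A) powr (3/2))\<^sup>2 \<le> L\<^sup>2"
    by (simp add: r_def)
qed

lemma midpoint_constant_sufficient:
  fixes x :: real
  assumes "x \<in> {1, 2, 3}"
  shows "4 * (x + 1) ^ 4 \<le> (x + 2)\<^sup>2 * (16 * x)"
  using assms by auto

lemma samples_constant_sufficient:
  fixes x :: real
  assumes "4 \<le> x"
  shows "4 * (x + 1) ^ 4 \<le> (x + 2)\<^sup>2 * (8 * (x - 1)\<^sup>2)"
proof -
  have "4 * 4 \<le> x * x"
    by (rule mult_mono) (use assms in auto)
  then have "16 \<le> x\<^sup>2"
    by (simp add: power2_eq_square)
  then have "16 * x\<^sup>2 \<le> x\<^sup>2 * x\<^sup>2"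
    by (intro mult_right_mono) auto
  moreover have "0 \<le> x * (x - 3)"
    using assms by simp
  ultimately show ?thesis
    by (simp add: algebra_simps power2_eq_square power4_eq_xxxx)
qed

theorem mainTheorem6:
  fixes \<gamma> :: "real \<Rightarrow> 'a::euclidean_space" and L :: real and w :: "'a \<Rightarrow> real"
    and a A :: real and d :: nat
  assumes "d \<ge> 1" and "DIM('a) = d + 1"
    and "0 < a" and "a \<le> A"
    and "MZ_curve_1 \<gamma> L w a A"
  shows "L \<ge> 2 * sqrt (real d + 1) * ((real d + 1) / (real d + 2)) * (a / A) powr (3/2)"
proof -
  note MZ = assms(5)
  have "0 \<le> L"
    using MZ unfolding MZ_curve_1_def sphere_curve_def by blast
  consider "d \<le> 3" | "4 \<le> d"
    by linarith
  then show ?thesis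
  proof cases
    case 1
    have "16 * real d * a \<le> (real d + 1) * L\<^sup>2 * A"
      using MZ_curve_1_length_midpoint[OF MZ \<open>0 < a\<close>] assms(2) by (simp add: add.commute)
    moreover have "4 * (real d + 1) ^ 4 \<le> (real d + 2)\<^sup>2 * (16 * real d)"
      using 1 \<open>d \<ge> 1\<close> by (intro midpoint_constant_sufficient)
        (auto simp: le_Suc_eq numeral_3_eq_3 numeral_2_eq_2)
    ultimately show ?thesis
      using assms \<open>0 \<le> L\<close> by (intro length_bound_of_square_bound) auto
  next
    case 2
    have "8 * (real d - 1)\<^sup>2 * a \<le> (real d + 1) * L\<^sup>2 * A"
      using MZ_curve_1_length_samples[OF MZ \<open>0 < a\<close>, of "d - 1"] assms(2) 2
      by (simp add: of_nat_diff add.commute)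
    moreover have "4 * (real d + 1) ^ 4 \<le> (real d + 2)\<^sup>2 * (8 * (real d - 1)\<^sup>2)"
      using 2 by (intro samples_constant_sufficient) simp
    ultimately show ?thesis
      using assms \<open>0 \<le> L\<close> by (intro length_bound_of_square_bound) auto
  qed
qed

end
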